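(* Let $\mu$ be a $\sigma$-finite measure on $[0,\infty)$ and let $F$ be a heavy-tailed distribution on $[0,\infty)$, absolutely continuous with respect to $\mu$ with density $f$. Let $\xi_1,\xi_2,\dots$ be i.i.d. with distribution $F$ and let $\tau$ be a positive integer-valued random variable independent of them, such that $S_\tau=\xi_1+\dots+\xi_\tau$ has a density $f^{*\tau}$ with respect to $\mu$. If $\mathbf E e^{\kappa\tau}<\infty$ for some $\kappa>0$, then $$\liminf_{x\to\infty}\frac{f^{*\tau}(x)}{f(x)}\le\mathbf E\tau.$$
   Context: A distribution $F$ on $[0,\infty)$ is heavy-tailed if $\int_0^\infty e^{\gamma x}F(dx)=\infty$ for every $\gamma>0$. *)

theory Defs
  imports "HOL-Probability.Probability"
begin

text \<open>A distribution F on [0,infinity) (a probability measure on the Borel sets of the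
reals giving no mass to the negative half-line) is heavy-tailed if its exponential
moments are all infinite.\<close>
definition heavy_tailed :: "real measure \<Rightarrow> bool" where
  "heavy_tailed F \<longleftrightarrow> (\<forall>\<gamma>>0. (\<integral>\<^sup>+ x. ennreal (exp (\<gamma> * x)) \<partial>F) = \<infinity>)"

end

theory Submission
  imports Defs
begin

(* Suppose g \<ge> b f beyond some x0 with b > E \<tau>.  Because F is heavy-tailed, for every d > 0
   there is a bounded submultiplicative weight v x = exp (\<gamma> min (max x 0) t) with \<integral> v dF = 1 + d,
   and a small \<gamma> makes v \<le> 1 + \<theta> below x0.  Comparing the two densities then gives
     b d = b \<integral> (v - 1) dF \<le> E v(S\<^sub>\<tau>) - 1 + b \<theta> \<le> E (1 + d)\<^bsup>\<tau>\<^esup> - 1 + b \<theta> \<le> d E \<tau> + O(d\<^sup>2) + b \<theta>,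
   where the middle step combines submultiplicativity with the independence of \<tau> and the \<xi>\<^sub>i,
   and the last one uses the exponential moment of \<tau>.  Letting first \<theta> and then d tend to 0
   yields b \<le> E \<tau>. *)

lemma one_plus_power_remainder_mono:
  fixes d D :: real
  assumes "0 \<le> d" "d \<le> D"
  shows "((1 + d) ^ n - 1 - n * d) * D\<^sup>2 \<le> ((1 + D) ^ n - 1 - n * D) * d\<^sup>2"
proof (induction n)
  case 0
  then show ?case by simp
next
  case (Suc n)
  have remainder_Suc: "(1 + x) ^ Suc n - 1 - Suc n * x = (1 + x) * ((1 + x) ^ n - 1 - n * x) + n * x\<^sup>2"
    for x :: real
    by (simp add: algebra_simps power2_eq_square)
  have remainder_nonneg: "0 \<le> (1 + d) ^ n - 1 - n * d"
    using Bernoulli_inequality[of d n] assms by simp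
  have "(1 + d) * (((1 + d) ^ n - 1 - n * d) * D\<^sup>2) \<le> (1 + D) * (((1 + D) ^ n - 1 - n * D) * d\<^sup>2)"
    by (rule mult_mono) (use Suc.IH assms remainder_nonneg in auto)
  then show ?case
    unfolding remainder_Suc by (simp add: algebra_simps)
qed

lemma one_plus_power_le:
  fixes d D :: real
  assumes "0 \<le> d" "d \<le> D"
  shows "(1 + d) ^ n \<le> 1 + n * d + (d / D)\<^sup>2 * (1 + D) ^ n"
proof (cases "D = 0")
  case True
  then show ?thesis using assms by simp
next
  case False
  have "((1 + d) ^ n - 1 - n * d) * D\<^sup>2 \<le> ((1 + D) ^ n - 1 - n * D) * d\<^sup>2"
    using one_plus_power_remainder_mono[OF assms] .
  also have "\<dots> \<le> (1 + D) ^ n * d\<^sup>2"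
    using assms by (intro mult_right_mono) (auto simp: algebra_simps)
  finally show ?thesis
    using False by (simp add: field_simps power_divide)
qed

definition trunc_exp :: "real \<Rightarrow> real \<Rightarrow> real \<Rightarrow> real" where
  "trunc_exp \<gamma> t x = exp (\<gamma> * min (max x 0) t)"

lemma trunc_exp_measurable [measurable]: "trunc_exp \<gamma> t \<in> borel_measurable borel"
  unfolding trunc_exp_def by measurable

lemma trunc_exp_ge_one: "0 \<le> \<gamma> \<Longrightarrow> 0 \<le> t \<Longrightarrow> 1 \<le> trunc_exp \<gamma> t x"
  unfolding trunc_exp_def by simp

lemma trunc_exp_le: "0 \<le> \<gamma> \<Longrightarrow> trunc_exp \<gamma> t x \<le> exp (\<gamma> * t)"
  unfolding trunc_exp_def by (simp add: mult_left_mono)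

lemma trunc_exp_le_exp: "0 \<le> \<gamma> \<Longrightarrow> trunc_exp \<gamma> t x \<le> exp (\<gamma> * max x 0)"
  unfolding trunc_exp_def by (simp add: mult_left_mono)

lemma trunc_exp_mono: "0 \<le> \<gamma> \<Longrightarrow> s \<le> t \<Longrightarrow> trunc_exp \<gamma> s x \<le> trunc_exp \<gamma> t x"
  unfolding trunc_exp_def by (auto intro!: mult_left_mono)

lemma trunc_exp_diff_le:
  assumes "0 \<le> \<gamma>" "s \<le> t"
  shows "trunc_exp \<gamma> t x - trunc_exp \<gamma> s x \<le> exp (\<gamma> * t) - exp (\<gamma> * s)"
  using assms unfolding trunc_exp_def
  by (cases "max x 0 \<le> s"; cases "max x 0 \<le> t") (auto simp: min_def intro!: mult_left_mono)

lemma trunc_exp_add_le: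
  assumes "0 \<le> \<gamma>" "0 \<le> t"
  shows "trunc_exp \<gamma> t (x + y) \<le> trunc_exp \<gamma> t x * trunc_exp \<gamma> t y"
proof -
  have "min (max (x + y) 0) t \<le> min (max x 0) t + min (max y 0) t"
    using assms by linarith
  then have "\<gamma> * min (max (x + y) 0) t \<le> \<gamma> * min (max x 0) t + \<gamma> * min (max y 0) t"
    using assms by (metis distrib_left mult_left_mono)
  then show ?thesis
    unfolding trunc_exp_def by (simp flip: exp_add)
qed

lemma trunc_exp_sum_le:
  fixes x :: "nat \<Rightarrow> real"
  assumes "0 \<le> \<gamma>" "0 \<le> t"
  shows "trunc_exp \<gamma> t (\<Sum>i<n. x i) \<le> (\<Prod>i<n. trunc_exp \<gamma> t (x i))"
proof (induction n)
  case 0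
  then show ?case using assms by (simp add: trunc_exp_def)
next
  case (Suc n)
  have "trunc_exp \<gamma> t (\<Sum>i<Suc n. x i) \<le> trunc_exp \<gamma> t (\<Sum>i<n. x i) * trunc_exp \<gamma> t (x n)"
    using trunc_exp_add_le[OF assms] by simp
  also have "\<dots> \<le> (\<Prod>i<n. trunc_exp \<gamma> t (x i)) * trunc_exp \<gamma> t (x n)"
    using Suc.IH by (intro mult_right_mono) (auto simp: trunc_exp_def)
  finally show ?case by simp
qed

lemma exp_diff_le_mult_exp:
  fixes \<gamma> s t :: real
  assumes "0 \<le> \<gamma>" "s \<le> t"
  shows "exp (\<gamma> * t) - exp (\<gamma> * s) \<le> \<gamma> * (t - s) * exp (\<gamma> * t)"
proof -
  have "exp (\<gamma> * t) * (1 - \<gamma> * (t - s)) \<le> exp (\<gamma> * t) * exp (- (\<gamma> * (t - s)))"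
    using exp_ge_add_one_self[of "- (\<gamma> * (t - s))"] by simp
  also have "\<dots> = exp (\<gamma> * s)"
    by (simp add: algebra_simps flip: exp_add)
  finally show ?thesis by (simp add: algebra_simps)
qed

lemma integrable_trunc_exp:
  assumes "finite_measure F" "sets F = sets borel" "0 \<le> \<gamma>"
  shows "integrable F (trunc_exp \<gamma> t)"
proof (rule finite_measure.integrable_const_bound[where B = "exp (\<gamma> * t)", OF assms(1)])
  show "AE x in F. norm (trunc_exp \<gamma> t x) \<le> exp (\<gamma> * t)"
    using trunc_exp_le[OF assms(3)] by (simp add: trunc_exp_def)
  show "trunc_exp \<gamma> t \<in> borel_measurable F"
    unfolding measurable_cong_sets[OF assms(2) refl] by measurable
qed

lemma continuous_on_integral_trunc_exp:
  assumes F: "prob_space F" "sets F = sets borel" and "0 \<le> \<gamma>"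
  shows "continuous_on {..T} (\<lambda>t. \<integral>x. trunc_exp \<gamma> t x \<partial>F)"
proof (rule lipschitz_on_continuous_on[OF lipschitz_onI])
  interpret prob_space F by (rule F(1))
  have integrable: "integrable F (trunc_exp \<gamma> t)" for t
    using integrable_trunc_exp[OF finite_measure F(2) \<open>0 \<le> \<gamma>\<close>] .
  have increment_le: "dist (\<integral>x. trunc_exp \<gamma> t x \<partial>F) (\<integral>x. trunc_exp \<gamma> s x \<partial>F)
      \<le> \<gamma> * exp (\<gamma> * T) * dist t s" if "s \<le> t" "t \<le> T" for s t
  proof -
    have "0 \<le> (\<integral>x. trunc_exp \<gamma> t x - trunc_exp \<gamma> s x \<partial>F)"
      using \<open>0 \<le> \<gamma>\<close> that trunc_exp_mono by (intro integral_nonneg_AE) auto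
    moreover have "(\<integral>x. trunc_exp \<gamma> t x - trunc_exp \<gamma> s x \<partial>F) \<le> (\<integral>x. exp (\<gamma> * t) - exp (\<gamma> * s) \<partial>F)"
      using \<open>0 \<le> \<gamma>\<close> that integrable trunc_exp_diff_le by (intro integral_mono) auto
    moreover have "exp (\<gamma> * t) - exp (\<gamma> * s) \<le> \<gamma> * exp (\<gamma> * T) * (t - s)"
    proof -
      have "exp (\<gamma> * t) \<le> exp (\<gamma> * T)"
        using \<open>0 \<le> \<gamma>\<close> \<open>t \<le> T\<close> by (simp add: mult_left_mono)
      then have "\<gamma> * (t - s) * exp (\<gamma> * t) \<le> \<gamma> * (t - s) * exp (\<gamma> * T)"
        using \<open>0 \<le> \<gamma>\<close> \<open>s \<le> t\<close> by (intro mult_left_mono) auto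
      then show ?thesis
        using exp_diff_le_mult_exp[OF \<open>0 \<le> \<gamma>\<close> \<open>s \<le> t\<close>] by (simp add: mult_ac)
    qed
    ultimately show ?thesis
      using integrable that by (simp add: dist_real_def prob_space)
  qed
  show "0 \<le> \<gamma> * exp (\<gamma> * T)"
    using \<open>0 \<le> \<gamma>\<close> by simp
  fix s t assume "s \<in> {..T}" "t \<in> {..T}"
  then show "dist (\<integral>x. trunc_exp \<gamma> s x \<partial>F) (\<integral>x. trunc_exp \<gamma> t x \<partial>F) \<le> \<gamma> * exp (\<gamma> * T) * dist s t"
    using increment_le[of s t] increment_le[of t s] by (cases "s \<le> t") (auto simp: dist_commute)
qed

lemma heavy_tailed_integral_trunc_exp_unbounded:
  assumes F: "prob_space F" "sets F = sets borel" "heavy_tailed F" and "0 < \<gamma>"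
  shows "\<exists>t\<ge>0. c \<le> (\<integral>x. trunc_exp \<gamma> t x \<partial>F)"
proof (rule ccontr)
  assume "\<not> ?thesis"
  then have bounded: "(\<integral>x. trunc_exp \<gamma> (real n) x \<partial>F) < c" for n :: nat
    by (meson not_le of_nat_0_le_iff)
  have "(\<integral>\<^sup>+x. ennreal (exp (\<gamma> * x)) \<partial>F) \<le> (\<integral>\<^sup>+x. (SUP n. ennreal (trunc_exp \<gamma> (real n) x)) \<partial>F)"
  proof (rule nn_integral_mono)
    fix x
    have "exp (\<gamma> * x) \<le> trunc_exp \<gamma> (real (nat \<lceil>max x 0\<rceil>)) x"
      unfolding trunc_exp_def using \<open>0 < \<gamma>\<close> by (auto simp: min_def intro!: mult_left_mono)
    then show "ennreal (exp (\<gamma> * x)) \<le> (SUP n. ennreal (trunc_exp \<gamma> (real n) x))"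
      by (intro SUP_upper2[of "nat \<lceil>max x 0\<rceil>"]) (auto intro: ennreal_leI)
  qed
  also have "\<dots> = (SUP n. \<integral>\<^sup>+x. ennreal (trunc_exp \<gamma> (real n) x) \<partial>F)"
  proof (rule nn_integral_monotone_convergence_SUP)
    show "incseq (\<lambda>n x. ennreal (trunc_exp \<gamma> (real n) x))"
      using \<open>0 < \<gamma>\<close> by (auto simp: incseq_def le_fun_def intro!: ennreal_leI trunc_exp_mono)
  qed (simp add: measurable_cong_sets[OF F(2) refl])
  also have "\<dots> = (SUP n. ennreal (\<integral>x. trunc_exp \<gamma> (real n) x \<partial>F))"
    using \<open>0 < \<gamma>\<close> integrable_trunc_exp[OF prob_space.finite_measure[OF F(1)] F(2)]
    by (subst nn_integral_eq_integral) (auto simp: trunc_exp_def)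
  also have "\<dots> \<le> ennreal c"
    using bounded by (intro SUP_least ennreal_leI less_imp_le)
  finally have "(\<integral>\<^sup>+x. ennreal (exp (\<gamma> * x)) \<partial>F) < \<infinity>"
    by (simp add: le_less_trans)
  with F(3) \<open>0 < \<gamma>\<close> show False
    unfolding heavy_tailed_def by auto
qed

lemma heavy_tailed_integral_trunc_exp_eq:
  assumes F: "prob_space F" "sets F = sets borel" "heavy_tailed F" and "0 < \<gamma>" "1 \<le> c"
  obtains t where "0 \<le> t" "(\<integral>x. trunc_exp \<gamma> t x \<partial>F) = c"
proof -
  obtain T where "0 \<le> T" "c \<le> (\<integral>x. trunc_exp \<gamma> T x \<partial>F)"
    using heavy_tailed_integral_trunc_exp_unbounded[OF F \<open>0 < \<gamma>\<close>] by blast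
  moreover have "(\<integral>x. trunc_exp \<gamma> 0 x \<partial>F) \<le> c"
    using \<open>1 \<le> c\<close> prob_space.prob_space[OF F(1)] by (simp add: trunc_exp_def)
  moreover have "continuous_on {0..T} (\<lambda>t. \<integral>x. trunc_exp \<gamma> t x \<partial>F)"
    using continuous_on_integral_trunc_exp[OF F(1,2) less_imp_le[OF \<open>0 < \<gamma>\<close>]]
    by (rule continuous_on_subset) auto
  ultimately obtain t where "0 \<le> t" "(\<integral>x. trunc_exp \<gamma> t x \<partial>F) = c"
    using IVT'[of "\<lambda>t. \<integral>x. trunc_exp \<gamma> t x \<partial>F" 0 c T] by blast
  then show ?thesis
    using that by blast
qed

lemma integral_density_excess:
  fixes h v :: "real \<Rightarrow> real"
  assumes \<mu>: "sets \<mu> = sets borel"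
    and [measurable]: "h \<in> borel_measurable borel" "v \<in> borel_measurable borel"
    and "\<And>x. 0 \<le> h x" "prob_space (density \<mu> (\<lambda>x. ennreal (h x)))" "\<And>x. \<bar>v x\<bar> \<le> B"
  shows "integrable \<mu> (\<lambda>x. h x * (v x - 1))"
    and "(\<integral>x. v x \<partial>density \<mu> (\<lambda>x. ennreal (h x))) - 1 = (\<integral>x. h x * (v x - 1) \<partial>\<mu>)"
proof -
  interpret H: prob_space "density \<mu> (\<lambda>x. ennreal (h x))" by fact
  have measurable_\<mu> [simp]: "measurable \<mu> N = measurable borel N" for N
    by (rule measurable_cong_sets[OF \<mu> refl])
  have "integrable (density \<mu> (\<lambda>x. ennreal (h x))) v"
    by (rule H.integrable_const_bound[where B = B]) (use assms(6) in auto)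
  then have "integrable (density \<mu> (\<lambda>x. ennreal (h x))) (\<lambda>x. v x - 1)"
    using H.prob_space by simp
  then show "integrable \<mu> (\<lambda>x. h x * (v x - 1))"
    using assms by (simp add: integrable_density)
  have "(\<integral>x. v x \<partial>density \<mu> (\<lambda>x. ennreal (h x))) - 1 = (\<integral>x. v x - 1 \<partial>density \<mu> (\<lambda>x. ennreal (h x)))"
    using \<open>integrable _ v\<close> H.prob_space by (simp add: Bochner_Integration.integral_diff)
  also have "\<dots> = (\<integral>x. h x * (v x - 1) \<partial>\<mu>)"
    using assms by (simp add: integral_density)
  finally show "(\<integral>x. v x \<partial>density \<mu> (\<lambda>x. ennreal (h x))) - 1 = (\<integral>x. h x * (v x - 1) \<partial>\<mu>)" .
qed

lemma integral_density_excess_le: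
  fixes f g v :: "real \<Rightarrow> real"
  assumes \<mu>: "sets \<mu> = sets borel"
    and [measurable]: "f \<in> borel_measurable borel" "g \<in> borel_measurable borel" "v \<in> borel_measurable borel"
    and f: "\<And>x. 0 \<le> f x" "prob_space (density \<mu> (\<lambda>x. ennreal (f x)))"
    and g: "\<And>x. 0 \<le> g x" "prob_space (density \<mu> (\<lambda>x. ennreal (g x)))"
    and "0 \<le> b" and ratio: "\<And>x. x0 \<le> x \<Longrightarrow> b * f x \<le> g x"
    and v: "\<And>x. 1 \<le> v x" "\<And>x. v x \<le> B" "\<And>x. x < x0 \<Longrightarrow> v x \<le> 1 + \<theta>"
  shows "b * ((\<integral>x. v x \<partial>density \<mu> (\<lambda>x. ennreal (f x))) - 1)
      \<le> (\<integral>x. v x \<partial>density \<mu> (\<lambda>x. ennreal (g x))) - 1 + b * \<theta>"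
proof -
  have v_abs: "\<bar>v x\<bar> \<le> B" for x
    using v(1,2)[of x] by simp
  have "0 \<le> \<theta>"
    using v(1,3)[of "x0 - 1"] by simp
  note f_excess = integral_density_excess[OF \<mu> _ _ f v_abs]
  note g_excess = integral_density_excess[OF \<mu> _ _ g v_abs]
  \<comment> \<open>the excess identity for the constant weight 2\<close>
  have f_mass: "integrable \<mu> f" "(\<integral>x. f x \<partial>\<mu>) = 1"
    using integral_density_excess[OF \<mu> _ _ f, of "\<lambda>_. 2" 2]
    by (simp_all add: prob_space.prob_space[OF f(2), simplified])
  have "b * (f x * (v x - 1)) \<le> g x * (v x - 1) + b * \<theta> * f x" for x
  proof (cases "x0 \<le> x")
    case True
    then have "b * f x * (v x - 1) \<le> g x * (v x - 1)"
      using ratio v(1)[of x] by (intro mult_right_mono) auto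
    moreover have "0 \<le> b * \<theta> * f x"
      using \<open>0 \<le> b\<close> \<open>0 \<le> \<theta>\<close> f(1)[of x] by simp
    ultimately show ?thesis by (simp add: mult_ac)
  next
    case False
    then have "b * f x * (v x - 1) \<le> b * f x * \<theta>"
      using v(3)[of x] \<open>0 \<le> b\<close> f(1)[of x] by (intro mult_left_mono) auto
    moreover have "0 \<le> g x * (v x - 1)"
      using g(1)[of x] v(1)[of x] by simp
    ultimately show ?thesis by (simp add: mult_ac)
  qed
  then have "(\<integral>x. b * (f x * (v x - 1)) \<partial>\<mu>) \<le> (\<integral>x. g x * (v x - 1) + b * \<theta> * f x \<partial>\<mu>)"
    using f_excess(1) g_excess(1) f_mass(1) by (intro integral_mono) auto
  also have "\<dots> = (\<integral>x. g x * (v x - 1) \<partial>\<mu>) + b * \<theta>"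
    using g_excess(1) f_mass by (simp add: Bochner_Integration.integral_add)
  finally show ?thesis
    using f_excess(2) g_excess(2) by simp
qed

locale random_sum = prob_space M for M :: "'a measure" +
  fixes F :: "real measure" and \<xi> :: "nat \<Rightarrow> 'a \<Rightarrow> real" and \<tau> :: "'a \<Rightarrow> nat"
  assumes indep_\<tau>_\<xi>: "indep_vars (\<lambda>_. borel)
      (\<lambda>j. case j of None \<Rightarrow> (\<lambda>\<omega>. real (\<tau> \<omega>)) | Some i \<Rightarrow> \<xi> i) UNIV"
    and distr_\<xi>: "\<And>i. distr M borel (\<xi> i) = F"
    and measurable_\<tau> [measurable]: "\<tau> \<in> measurable M (count_space UNIV)"
begin

definition S :: "'a \<Rightarrow> real" where
  "S \<omega> = (\<Sum>i<\<tau> \<omega>. \<xi> i \<omega>)"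

lemma measurable_\<xi> [measurable]: "\<xi> i \<in> borel_measurable M"
proof -
  have "(case Some i of None \<Rightarrow> (\<lambda>\<omega>. real (\<tau> \<omega>)) | Some i \<Rightarrow> \<xi> i) \<in> borel_measurable M"
    using indep_\<tau>_\<xi> unfolding indep_vars_def by blast
  then show ?thesis by simp
qed

lemma measurable_S [measurable]: "S \<in> borel_measurable M"
  unfolding S_def by (rule measurable_compose_countable[OF _ measurable_\<tau>]) measurable

lemma prob_space_F: "prob_space F"
  using prob_space_distr[of "\<xi> 0" borel] distr_\<xi> by simp

lemma sets_F: "sets F = sets borel"
  using sets_distr[of M borel "\<xi> 0"] distr_\<xi> by simp

lemma nn_integral_at_\<tau>:
  fixes h :: "nat \<Rightarrow> 'a \<Rightarrow> ennreal"
  assumes [measurable]: "\<And>n. h n \<in> borel_measurable M"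
  shows "(\<integral>\<^sup>+\<omega>. h (\<tau> \<omega>) \<omega> \<partial>M) = (\<Sum>n. \<integral>\<^sup>+\<omega>. of_bool (\<tau> \<omega> = n) * h n \<omega> \<partial>M)"
proof -
  have "(\<lambda>n. of_bool (\<tau> \<omega> = n) * h n \<omega>) = (\<lambda>n. if n = \<tau> \<omega> then h n \<omega> else 0)" for \<omega>
    by auto
  then have "h (\<tau> \<omega>) \<omega> = (\<Sum>n. of_bool (\<tau> \<omega> = n) * h n \<omega>)" for \<omega>
    using sums_unique[OF sums_single[of "\<tau> \<omega>" "\<lambda>n. h n \<omega>"]] by simp
  then show ?thesis
    by (simp add: nn_integral_suminf)
qed

lemma nn_integral_prod_\<xi>:
  fixes u :: "real \<Rightarrow> ennreal"
  assumes [measurable]: "u \<in> borel_measurable borel"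
  shows "(\<integral>\<^sup>+\<omega>. (\<Prod>i<\<tau> \<omega>. u (\<xi> i \<omega>)) \<partial>M) = (\<integral>\<^sup>+\<omega>. (\<integral>\<^sup>+x. u x \<partial>F) ^ \<tau> \<omega> \<partial>M)"
proof -
  have "(\<integral>\<^sup>+\<omega>. of_bool (\<tau> \<omega> = n) * (\<Prod>i<n. u (\<xi> i \<omega>)) \<partial>M)
      = (\<integral>\<^sup>+\<omega>. of_bool (\<tau> \<omega> = n) * (\<integral>\<^sup>+x. u x \<partial>F) ^ n \<partial>M)" for n
  proof -
    define I where "I = insert None (Some ` {..<n})"
    define Y :: "nat option \<Rightarrow> real \<Rightarrow> ennreal" where "Y j = (case j of None \<Rightarrow> (\<lambda>r. of_bool (r = real n)) | Some i \<Rightarrow> u)" for j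
    define X where "X j = (case j of None \<Rightarrow> (\<lambda>\<omega>. real (\<tau> \<omega>)) | Some i \<Rightarrow> \<xi> i)" for j
    have "indep_vars (\<lambda>_. borel) (\<lambda>j \<omega>. Y j (X j \<omega>)) UNIV"
      by (rule indep_vars_compose2[OF indep_\<tau>_\<xi>[folded X_def]]) (auto simp: Y_def split: option.split)
    then have "(\<integral>\<^sup>+\<omega>. (\<Prod>j\<in>I. Y j (X j \<omega>)) \<partial>M) = (\<Prod>j\<in>I. \<integral>\<^sup>+\<omega>. Y j (X j \<omega>) \<partial>M)"
      by (intro indep_vars_nn_integral) (auto simp: I_def intro: indep_vars_subset)
    moreover have "(\<integral>\<^sup>+\<omega>. u (\<xi> i \<omega>) \<partial>M) = (\<integral>\<^sup>+x. u x \<partial>F)" for i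
      unfolding distr_\<xi>[of i, symmetric] by (simp add: nn_integral_distr)
    ultimately show ?thesis
      by (simp add: I_def Y_def X_def prod.reindex nn_integral_multc)
  qed
  then show ?thesis
    by (simp add: nn_integral_at_\<tau>[of "\<lambda>n \<omega>. \<Prod>i<n. u (\<xi> i \<omega>)"]
        nn_integral_at_\<tau>[of "\<lambda>n \<omega>. (\<integral>\<^sup>+x. u x \<partial>F) ^ n"])
qed


lemma integral_trunc_exp_S_le:
  assumes "0 \<le> \<gamma>" "0 \<le> t"
    and integrable: "integrable M (\<lambda>\<omega>. (\<integral>x. trunc_exp \<gamma> t x \<partial>F) ^ \<tau> \<omega>)"
  shows "(\<integral>\<omega>. trunc_exp \<gamma> t (S \<omega>) \<partial>M) \<le> (\<integral>\<omega>. (\<integral>x. trunc_exp \<gamma> t x \<partial>F) ^ \<tau> \<omega> \<partial>M)"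
proof -
  define m where "m = (\<integral>x. trunc_exp \<gamma> t x \<partial>F)"
  have pos: "0 < trunc_exp \<gamma> t x" for x
    by (simp add: trunc_exp_def)
  have "0 \<le> m"
    unfolding m_def by (simp add: pos less_imp_le)
  have nn_integral_F: "(\<integral>\<^sup>+x. ennreal (trunc_exp \<gamma> t x) \<partial>F) = ennreal m"
    unfolding m_def using integrable_trunc_exp[OF prob_space.finite_measure[OF prob_space_F] sets_F \<open>0 \<le> \<gamma>\<close>]
    by (rule nn_integral_eq_integral) (simp add: pos less_imp_le)
  have "integrable M (\<lambda>\<omega>. trunc_exp \<gamma> t (S \<omega>))"
    by (rule integrable_const_bound[where B = "exp (\<gamma> * t)"]) (use trunc_exp_le[OF \<open>0 \<le> \<gamma>\<close>] pos in \<open>auto simp: less_imp_le\<close>)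
  then have "ennreal (\<integral>\<omega>. trunc_exp \<gamma> t (S \<omega>) \<partial>M) = (\<integral>\<^sup>+\<omega>. ennreal (trunc_exp \<gamma> t (S \<omega>)) \<partial>M)"
    by (rule nn_integral_eq_integral[symmetric]) (simp add: pos less_imp_le)
  also have "\<dots> \<le> (\<integral>\<^sup>+\<omega>. (\<Prod>i<\<tau> \<omega>. ennreal (trunc_exp \<gamma> t (\<xi> i \<omega>))) \<partial>M)"
    using trunc_exp_sum_le[OF assms(1,2)] pos
    by (intro nn_integral_mono) (simp add: S_def prod_ennreal less_imp_le ennreal_leI)
  also have "\<dots> = (\<integral>\<^sup>+\<omega>. (\<integral>\<^sup>+x. ennreal (trunc_exp \<gamma> t x) \<partial>F) ^ \<tau> \<omega> \<partial>M)"
    by (rule nn_integral_prod_\<xi>) measurable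
  also have "\<dots> = (\<integral>\<^sup>+\<omega>. ennreal (m ^ \<tau> \<omega>) \<partial>M)"
    unfolding nn_integral_F using \<open>0 \<le> m\<close> by (simp add: ennreal_power)
  also have "\<dots> = ennreal (\<integral>\<omega>. m ^ \<tau> \<omega> \<partial>M)"
    using integrable unfolding m_def
    by (rule nn_integral_eq_integral) (simp add: \<open>0 \<le> m\<close>[unfolded m_def])
  finally show ?thesis
    unfolding m_def using \<open>0 \<le> m\<close>[unfolded m_def] by (simp add: ennreal_le_iff)
qed


lemma integrable_power_\<tau>:
  assumes "integrable M (\<lambda>\<omega>. exp (\<kappa> * real (\<tau> \<omega>)))" "0 \<le> c" "c \<le> exp \<kappa>"
  shows "integrable M (\<lambda>\<omega>. c ^ \<tau> \<omega>)"
proof (rule Bochner_Integration.integrable_bound[OF assms(1)])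
  show "(\<lambda>\<omega>. c ^ \<tau> \<omega>) \<in> borel_measurable M"
    by (rule measurable_compose_countable[where f = "\<lambda>n \<omega>. c ^ n", OF _ measurable_\<tau>]) simp
  have "c ^ n \<le> exp \<kappa> ^ n" for n
    using assms(3,2) by (rule power_mono)
  then show "AE \<omega> in M. norm (c ^ \<tau> \<omega>) \<le> norm (exp (\<kappa> * real (\<tau> \<omega>)))"
    using \<open>0 \<le> c\<close> by (simp add: exp_of_nat_mult[symmetric] mult.commute)
qed

lemma integrable_\<tau>:
  assumes "0 < \<kappa>" "integrable M (\<lambda>\<omega>. exp (\<kappa> * real (\<tau> \<omega>)))"
  shows "integrable M (\<lambda>\<omega>. real (\<tau> \<omega>))"
proof (rule Bochner_Integration.integrable_bound[OF integrable_mult_right[OF assms(2), of "1 / \<kappa>"]])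
  have "\<kappa> * real n \<le> exp (\<kappa> * real n)" for n
    using exp_ge_add_one_self[of "\<kappa> * real n"] by linarith
  then show "AE \<omega> in M. norm (real (\<tau> \<omega>)) \<le> norm (1 / \<kappa> * exp (\<kappa> * real (\<tau> \<omega>)))"
    using \<open>0 < \<kappa>\<close> by (simp add: field_simps)
qed simp

lemma expectation_one_plus_power_\<tau>_le:
  assumes "0 < \<kappa>" "integrable M (\<lambda>\<omega>. exp (\<kappa> * real (\<tau> \<omega>)))" "0 \<le> d" "d \<le> exp \<kappa> - 1"
  shows "(\<integral>\<omega>. (1 + d) ^ \<tau> \<omega> \<partial>M)
    \<le> 1 + d * (\<integral>\<omega>. real (\<tau> \<omega>) \<partial>M) + (d / (exp \<kappa> - 1))\<^sup>2 * (\<integral>\<omega>. exp (\<kappa> * real (\<tau> \<omega>)) \<partial>M)"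
proof -
  have "(\<integral>\<omega>. (1 + d) ^ \<tau> \<omega> \<partial>M)
      \<le> (\<integral>\<omega>. 1 + d * real (\<tau> \<omega>) + (d / (exp \<kappa> - 1))\<^sup>2 * exp (\<kappa> * real (\<tau> \<omega>)) \<partial>M)"
  proof (rule integral_mono)
    show "integrable M (\<lambda>\<omega>. (1 + d) ^ \<tau> \<omega>)"
      using assms by (intro integrable_power_\<tau>) auto
    show "integrable M (\<lambda>\<omega>. 1 + d * real (\<tau> \<omega>) + (d / (exp \<kappa> - 1))\<^sup>2 * exp (\<kappa> * real (\<tau> \<omega>)))"
      using integrable_\<tau>[OF assms(1,2)] assms(2) by simp
    show "(1 + d) ^ \<tau> \<omega> \<le> 1 + d * real (\<tau> \<omega>) + (d / (exp \<kappa> - 1))\<^sup>2 * exp (\<kappa> * real (\<tau> \<omega>))" for \<omega>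
      using one_plus_power_le[OF assms(3,4), of "\<tau> \<omega>"] by (simp add: exp_of_nat_mult[symmetric] mult.commute)
  qed
  also have "\<dots> = 1 + d * (\<integral>\<omega>. real (\<tau> \<omega>) \<partial>M) + (d / (exp \<kappa> - 1))\<^sup>2 * (\<integral>\<omega>. exp (\<kappa> * real (\<tau> \<omega>)) \<partial>M)"
    using integrable_\<tau>[OF assms(1,2)] assms(2) by (simp add: Bochner_Integration.integral_add prob_space)
  finally show ?thesis .
qed


context
  fixes \<mu> :: "real measure" and f g :: "real \<Rightarrow> real" and \<kappa> :: real
  assumes heavy: "heavy_tailed F"
    and sets_\<mu>: "sets \<mu> = sets borel"
    and f [measurable]: "f \<in> borel_measurable borel" and f_nonneg: "\<And>x. 0 \<le> f x"
    and F_density: "F = density \<mu> (\<lambda>x. ennreal (f x))"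
    and g [measurable]: "g \<in> borel_measurable borel" and g_nonneg: "\<And>x. 0 \<le> g x"
    and S_density: "distr M borel S = density \<mu> (\<lambda>x. ennreal (g x))"
    and \<kappa>: "0 < \<kappa>" and exp_moment: "integrable M (\<lambda>\<omega>. exp (\<kappa> * real (\<tau> \<omega>)))"
begin

lemma density_ratio_bound_approx:
  assumes "0 < b" and ratio: "\<And>x. x0 \<le> x \<Longrightarrow> b * f x \<le> g x"
    and "0 < d" "d \<le> exp \<kappa> - 1" "0 < \<theta>"
  shows "b * d \<le> d * (\<integral>\<omega>. real (\<tau> \<omega>) \<partial>M)
    + (d / (exp \<kappa> - 1))\<^sup>2 * (\<integral>\<omega>. exp (\<kappa> * real (\<tau> \<omega>)) \<partial>M) + b * \<theta>"
proof -
  define x1 where "x1 = max x0 1"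
  define \<gamma> where "\<gamma> = ln (1 + \<theta>) / x1"
  have "0 < \<gamma>" "exp (\<gamma> * x1) = 1 + \<theta>"
    unfolding \<gamma>_def x1_def using \<open>0 < \<theta>\<close> by auto
  obtain t where "0 \<le> t" and mean: "(\<integral>x. trunc_exp \<gamma> t x \<partial>F) = 1 + d"
    using heavy_tailed_integral_trunc_exp_eq[OF prob_space_F sets_F heavy \<open>0 < \<gamma>\<close>, where c = "1 + d"] \<open>0 < d\<close>
    by auto
  \<comment> \<open>below \<open>x0\<close>, where the ratio bound is unavailable, the weight exceeds 1 by at most \<open>\<theta>\<close>\<close>
  have small: "trunc_exp \<gamma> t x \<le> 1 + \<theta>" if "x < x0" for x
  proof -
    have "\<gamma> * max x 0 \<le> \<gamma> * x1"
      using that \<open>0 < \<gamma>\<close> unfolding x1_def by (intro mult_left_mono) auto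
    then have "exp (\<gamma> * max x 0) \<le> exp (\<gamma> * x1)"
      by (simp only: exp_le_cancel_iff)
    then show ?thesis
      using trunc_exp_le_exp[of \<gamma> t x] \<open>0 < \<gamma>\<close> \<open>exp (\<gamma> * x1) = 1 + \<theta>\<close> by linarith
  qed
  have "b * d \<le> (\<integral>x. trunc_exp \<gamma> t x \<partial>distr M borel S) - 1 + b * \<theta>"
    using integral_density_excess_le[OF sets_\<mu> f g trunc_exp_measurable f_nonneg _ g_nonneg _
        less_imp_le[OF \<open>0 < b\<close>] ratio trunc_exp_ge_one trunc_exp_le small]
      \<open>0 < \<gamma>\<close> \<open>0 \<le> t\<close> mean prob_space_F prob_space_distr[OF measurable_S]
    unfolding F_density S_density by auto
  also have "(\<integral>x. trunc_exp \<gamma> t x \<partial>distr M borel S) = (\<integral>\<omega>. trunc_exp \<gamma> t (S \<omega>) \<partial>M)"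
    by (rule integral_distr) measurable
  also have "\<dots> \<le> (\<integral>\<omega>. (1 + d) ^ \<tau> \<omega> \<partial>M)"
    using integral_trunc_exp_S_le[of \<gamma> t] integrable_power_\<tau>[OF exp_moment, of "1 + d"]
      \<open>0 < \<gamma>\<close> \<open>0 \<le> t\<close> \<open>0 < d\<close> \<open>d \<le> exp \<kappa> - 1\<close> mean by simp
  also have "\<dots> \<le> 1 + d * (\<integral>\<omega>. real (\<tau> \<omega>) \<partial>M)
      + (d / (exp \<kappa> - 1))\<^sup>2 * (\<integral>\<omega>. exp (\<kappa> * real (\<tau> \<omega>)) \<partial>M)"
    using expectation_one_plus_power_\<tau>_le[OF \<kappa> exp_moment] \<open>0 < d\<close> \<open>d \<le> exp \<kappa> - 1\<close> by simp
  finally show ?thesis by simp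
qed

lemma density_ratio_bound:
  assumes "0 < b" and ratio: "\<And>x. x0 \<le> x \<Longrightarrow> b * f x \<le> g x"
  shows "b \<le> (\<integral>\<omega>. real (\<tau> \<omega>) \<partial>M)"
proof -
  define E where "E = (\<integral>\<omega>. real (\<tau> \<omega>) \<partial>M)"
  define C where "C = (\<integral>\<omega>. exp (\<kappa> * real (\<tau> \<omega>)) \<partial>M) / (exp \<kappa> - 1)\<^sup>2"
  have "0 < exp \<kappa> - 1" "0 \<le> C"
    using \<kappa> by (auto simp: C_def)
  have scaled: "b * d \<le> d * E + d\<^sup>2 * C" if "0 < d" "d \<le> exp \<kappa> - 1" for d
  proof (rule field_le_epsilon)
    fix e :: real
    assume "0 < e"
    then show "b * d \<le> d * E + d\<^sup>2 * C + e"
      using density_ratio_bound_approx[OF assms that, where \<theta> = "e / b"] \<open>0 < b\<close>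
      by (simp add: E_def C_def power_divide)
  qed
  have approx: "b \<le> E + d * C" if "0 < d" "d \<le> exp \<kappa> - 1" for d
  proof -
    have "d * b \<le> d * (E + d * C)"
      using scaled[OF that] by (simp add: power2_eq_square algebra_simps)
    then show ?thesis
      using \<open>0 < d\<close> by simp
  qed
  show ?thesis
    unfolding E_def[symmetric]
  proof (rule field_le_epsilon)
    fix e :: real
    assume "0 < e"
    define d where "d = min (exp \<kappa> - 1) (e / (C + 1))"
    have "0 < d" "d \<le> exp \<kappa> - 1"
      unfolding d_def using \<open>0 < e\<close> \<open>0 < exp \<kappa> - 1\<close> \<open>0 \<le> C\<close> by auto
    have "d * C \<le> e / (C + 1) * C"
      unfolding d_def using \<open>0 \<le> C\<close> by (intro mult_right_mono) auto
    also have "\<dots> \<le> e"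
      using \<open>0 < e\<close> \<open>0 \<le> C\<close> by (simp add: field_simps)
    finally show "b \<le> E + e"
      using approx[OF \<open>0 < d\<close> \<open>d \<le> exp \<kappa> - 1\<close>] by linarith
  qed
qed

end

end

lemma less_Liminf_ratio_imp_eventually_le:
  fixes f g :: "real \<Rightarrow> real"
  assumes "\<And>x. 0 \<le> f x" "\<And>x. 0 \<le> g x"
    and "ereal b < Liminf (at_top \<sqinter> principal {x. 0 < f x}) (\<lambda>x. ereal (g x / f x))"
  obtains x0 where "\<And>x. x0 \<le> x \<Longrightarrow> b * f x \<le> g x"
proof -
  obtain x0 where x0: "\<And>x. x0 \<le> x \<Longrightarrow> 0 < f x \<Longrightarrow> b < g x / f x"
    using less_LiminfD[OF assms(3)]
    unfolding eventually_inf_principal eventually_at_top_linorder by auto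
  have "b * f x \<le> g x" if "x0 \<le> x" for x
  proof (cases "f x = 0")
    case True
    then show ?thesis using assms(2) by simp
  next
    case False
    then have "0 < f x"
      using assms(1)[of x] by simp
    then show ?thesis
      using x0[OF that] by (simp add: pos_less_divide_eq less_imp_le)
  qed
  then show ?thesis by (rule that)
qed

theorem lemma2:
  fixes M :: "'a measure" and \<mu> F :: "real measure"
    and f g :: "real \<Rightarrow> real"
    and \<xi> :: "nat \<Rightarrow> 'a \<Rightarrow> real" and \<tau> :: "'a \<Rightarrow> nat"
  assumes M: "prob_space M"
    and mu_sets: "sets \<mu> = sets borel" and mu_sf: "sigma_finite_measure \<mu>"
    and mu_supp: "emeasure \<mu> {..<0} = 0"
    and F_sets: "sets F = sets borel" and F_prob: "prob_space F"
    and F_supp: "emeasure F {..<0} = 0"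
    and F_heavy: "heavy_tailed F"
    and f_meas: "f \<in> borel_measurable borel" and f_nonneg: "\<And>x. 0 \<le> f x"
    and F_dens: "F = density \<mu> (\<lambda>x. ennreal (f x))"
    and \<xi>_indep: "prob_space.indep_vars M (\<lambda>_. borel) \<xi> UNIV"
    and \<xi>_distr: "\<And>i. distr M borel (\<xi> i) = F"
    and \<tau>_meas: "\<tau> \<in> measurable M (count_space UNIV)"
    and \<tau>_pos: "\<And>\<omega>. \<omega> \<in> space M \<Longrightarrow> 0 < \<tau> \<omega>"
    and \<tau>_indep: "prob_space.indep_vars M (\<lambda>_. borel)
                     (\<lambda>j. case j of None \<Rightarrow> (\<lambda>\<omega>. real (\<tau> \<omega>)) | Some i \<Rightarrow> \<xi> i) UNIV"
    and g_meas: "g \<in> borel_measurable borel" and g_nonneg: "\<And>x. 0 \<le> g x"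
    and S_dens: "distr M borel (\<lambda>\<omega>. \<Sum>i<\<tau> \<omega>. \<xi> i \<omega>) = density \<mu> (\<lambda>x. ennreal (g x))"
    and exp_mom: "\<exists>\<kappa>>0. (\<integral>\<^sup>+ \<omega>. ennreal (exp (\<kappa> * real (\<tau> \<omega>))) \<partial>M) < \<infinity>"
  shows "Liminf (at_top \<sqinter> principal {x. 0 < f x}) (\<lambda>x. ereal (g x / f x))
           \<le> ereal (\<integral>\<omega>. real (\<tau> \<omega>) \<partial>M)"
proof -
  interpret random_sum M F \<xi> \<tau>
    by (intro random_sum.intro random_sum_axioms.intro M \<tau>_indep \<xi>_distr \<tau>_meas)
  obtain \<kappa> where "0 < \<kappa>" and "(\<integral>\<^sup>+ \<omega>. ennreal (exp (\<kappa> * real (\<tau> \<omega>))) \<partial>M) < \<infinity>"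
    using exp_mom by blast
  then have "integrable M (\<lambda>\<omega>. exp (\<kappa> * real (\<tau> \<omega>)))"
    by (intro integrableI_nonneg) auto
  note ratio_bound = density_ratio_bound[OF F_heavy mu_sets f_meas f_nonneg F_dens g_meas g_nonneg
      S_dens[folded S_def] \<open>0 < \<kappa>\<close> this]
  show ?thesis
  proof (rule ccontr)
    assume "\<not> ?thesis"
    then have "ereal (\<integral>\<omega>. real (\<tau> \<omega>) \<partial>M)
        < Liminf (at_top \<sqinter> principal {x. 0 < f x}) (\<lambda>x. ereal (g x / f x))"
      by (simp only: not_le)
    from ereal_dense2[OF this] obtain b where "ereal (\<integral>\<omega>. real (\<tau> \<omega>) \<partial>M) < ereal b"
      and b: "ereal b < Liminf (at_top \<sqinter> principal {x. 0 < f x}) (\<lambda>x. ereal (g x / f x))"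
      by blast
    then have "(\<integral>\<omega>. real (\<tau> \<omega>) \<partial>M) < b"
      by simp
    moreover have "0 \<le> (\<integral>\<omega>. real (\<tau> \<omega>) \<partial>M)"
      by (rule integral_nonneg_AE) simp
    ultimately have "0 < b"
      by linarith
    obtain x0 where "\<And>x. x0 \<le> x \<Longrightarrow> b * f x \<le> g x"
      using less_Liminf_ratio_imp_eventually_le[OF f_nonneg g_nonneg b] by blast
    then have "b \<le> (\<integral>\<omega>. real (\<tau> \<omega>) \<partial>M)"
      by (rule ratio_bound[OF \<open>0 < b\<close>])
    with \<open>(\<integral>\<omega>. real (\<tau> \<omega>) \<partial>M) < b\<close> show False
      by simp
  qed
qed

end
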